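(* Let $(X,d,m)$ be a metric measure space and let $p\ge1$. Let $A\subseteq X$ be such that $m(A)=0$. Then $\mathrm{AM}_p(A,m)\le m^{+,p}(A)$.
   Context: Metric measure space: complete separable metric space with nonnegative Borel measure finite on bounded sets. Minkowski content: $m^{+,p}(A)=\liminf_{r\to0}m(\overline B_r(A)\setminus A)/r^p$ with $\overline B_r(A)=\{z:d(z,A)\le r\}$. Approximate modulus: $\mathrm{AM}_p(A,m)=\inf\liminf_j\int\rho_j^pdm$, infimum over sequences of Borel $\rho_j:X\to[0,\infty]$ with $\liminf_j\int_\gamma\rho_j\,ds\ge1$ for every continuous curve $\gamma:[0,1]\to X$ whose image meets $A$. *)

theory Defs
  imports "HOL-Analysis.Analysis"
begin

definition outer_meas :: "'a measure \<Rightarrow> 'a set \<Rightarrow> ennreal" where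
  "outer_meas M S = (INF B \<in> {B \<in> sets M. S \<subseteq> B}. emeasure M B)"

text \<open>Closed r-neighbourhood {z. d(z,A) \<le> r}; d(z,{}) = +infinity, so empty for A = {}.\<close>
definition closed_nbhd :: "'a::metric_space set \<Rightarrow> real \<Rightarrow> 'a set" where
  "closed_nbhd A r = {z. A \<noteq> {} \<and> infdist z A \<le> r}"

definition minkowski_content :: "'a::metric_space measure \<Rightarrow> real \<Rightarrow> 'a set \<Rightarrow> ennreal" where
  "minkowski_content M p A =
     Liminf (at_right 0) (\<lambda>r. outer_meas M (closed_nbhd A r - A) / ennreal (r powr p))"

definition curve_var :: "(real \<Rightarrow> 'a::metric_space) \<Rightarrow> real \<Rightarrow> real \<Rightarrow> ennreal" where
  "curve_var g a b = (SUP ts \<in> {ts. sorted ts \<and> set ts \<subseteq> {a..b}}.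
       ennreal (\<Sum>i < length ts - 1. dist (g (ts ! i)) (g (ts ! Suc i))))"

definition rectifiable_curve :: "(real \<Rightarrow> 'a::metric_space) \<Rightarrow> bool" where
  "rectifiable_curve g \<longleftrightarrow> continuous_on {0..1} g \<and> curve_var g 0 1 < \<infinity>"

definition arclen :: "(real \<Rightarrow> 'a::metric_space) \<Rightarrow> real \<Rightarrow> real" where
  "arclen g t = enn2real (curve_var g 0 (max 0 (min t 1)))"

definition line_integral :: "('a::metric_space \<Rightarrow> ennreal) \<Rightarrow> (real \<Rightarrow> 'a) \<Rightarrow> ennreal" where
  "line_integral \<rho> g = (\<integral>\<^sup>+ t. \<rho> (g t) * indicator {0..1} t \<partial>interval_measure (arclen g))"

definition enn_powr :: "ennreal \<Rightarrow> real \<Rightarrow> ennreal" where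
  "enn_powr x p = (if x = \<infinity> then \<infinity> else ennreal (enn2real x powr p))"

definition test_curves :: "'a::metric_space set \<Rightarrow> (real \<Rightarrow> 'a) set" where
  "test_curves A = {g. rectifiable_curve g \<and> g ` {0..1} \<inter> A \<noteq> {} \<and>
                       (\<exists>s\<in>{0..1}. \<exists>t\<in>{0..1}. g s \<noteq> g t)}"

definition AM_admissible :: "'a::metric_space measure \<Rightarrow> 'a set \<Rightarrow> (nat \<Rightarrow> 'a \<Rightarrow> ennreal) \<Rightarrow> bool" where
  "AM_admissible M A \<rho> \<longleftrightarrow> (\<forall>j. \<rho> j \<in> borel_measurable M) \<and>
     (\<forall>g \<in> test_curves A. Liminf sequentially (\<lambda>j. line_integral (\<rho> j) g) \<ge> 1)"

definition approx_modulus :: "real \<Rightarrow> 'a::metric_space set \<Rightarrow> 'a measure \<Rightarrow> ennreal" where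
  "approx_modulus p A M = (INF \<rho> \<in> {\<rho>. AM_admissible M A \<rho>}.
      Liminf sequentially (\<lambda>j. \<integral>\<^sup>+ x. enn_powr (\<rho> j x) p \<partial>M))"

definition metric_measure_space :: "'a::polish_space measure \<Rightarrow> bool" where
  "metric_measure_space M \<longleftrightarrow> sets M = sets borel \<and>
     (\<forall>S \<in> sets M. bounded S \<longrightarrow> emeasure M S < \<infinity>)"

end

theory Submission
  imports Defs
begin

(* Along a sequence r_j -> 0 realising the liminf in the Minkowski content, test the approximate
   modulus with rho_j = (1/r_j) times the indicator of the closed r_j-neighbourhood N_j of A.
   A nonconstant curve through a point x of A whose diameter exceeds r_j contains a subarc that
   stays in the closed r_j-ball around x and whose endpoints are r_j apart; this subarc lies in
   N_j and has length at least r_j, so the line integral of rho_j is at least 1 for all large j.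
   The p-energy of rho_j is m(N_j) / r_j^p, and m(N_j) = m(N_j - A) because A is null. *)

fun chord_sum :: "(real \<Rightarrow> 'a::metric_space) \<Rightarrow> real list \<Rightarrow> real" where
  "chord_sum g (x # y # xs) = dist (g x) (g y) + chord_sum g (y # xs)"
| "chord_sum g _ = 0"

lemma sum_dist_eq_chord_sum:
  "(\<Sum>i < length ts - 1. dist (g (ts ! i)) (g (ts ! Suc i))) = chord_sum g ts"
proof (induction g ts rule: chord_sum.induct)
  case (1 g x y xs)
  have "length (x # y # xs) - 1 = Suc (length (y # xs) - 1)" by simp
  then show ?case using 1 by (simp only: sum.lessThan_Suc_shift) simp
qed auto

lemma chord_sum_nonneg: "0 \<le> chord_sum g ts"
  by (induction g ts rule: chord_sum.induct) auto

lemma chord_sum_le_Cons: "chord_sum g ys \<le> chord_sum g (x # ys)"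
  by (cases ys) (auto simp: chord_sum_nonneg)

lemma chord_sum_add_le_append: "chord_sum g xs + chord_sum g ys \<le> chord_sum g (xs @ ys)"
  by (induction g xs rule: chord_sum.induct) (auto simp: chord_sum_le_Cons)

lemma chord_sum_append_le_insert:
  "chord_sum g (xs @ ys) \<le> chord_sum g (xs @ [b]) + chord_sum g (b # ys)"
proof (induction g xs rule: chord_sum.induct)
  case ("2_2" g x)
  then show ?case by (cases ys) (auto simp: dist_triangle)
qed (auto simp: chord_sum_le_Cons)

lemma chord_sum_le_map_max:
  assumes "sorted ts" "\<forall>x\<in>set ts. x = t \<or> s < x" "t \<le> s"
  shows "chord_sum g ts \<le> chord_sum g (map (max s) ts) + dist (g t) (g s)"
  using assms
proof (induction g ts rule: chord_sum.induct)
  case (1 g x y xs)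
  show ?case
  proof (cases "s < x")
    case True
    then have "map (max s) (x # y # xs) = x # y # xs"
      using "1.prems" by (intro map_idI) auto
    then show ?thesis by simp
  next
    case False
    then have "x = t" using "1.prems" by auto
    show ?thesis
    proof (cases "s < y")
      case True
      then have "map (max s) (y # xs) = y # xs"
        using "1.prems" by (intro map_idI) auto
      moreover have "dist (g t) (g y) \<le> dist (g s) (g y) + dist (g t) (g s)"
        by (metis add.commute dist_triangle)
      ultimately show ?thesis using \<open>x = t\<close> "1.prems" True by simp
    next
      case False
      then have "y = t" using "1.prems" by auto
      then show ?thesis using 1 \<open>x = t\<close> by simp
    qed
  qed
qed auto

lemma curve_var_eq_SUP_chord_sum:
  "curve_var g a b = (SUP ts\<in>{ts. sorted ts \<and> set ts \<subseteq> {a..b}}. ennreal (chord_sum g ts))"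
  unfolding curve_var_def sum_dist_eq_chord_sum ..

lemma chord_sum_le_curve_var:
  "sorted ts \<Longrightarrow> set ts \<subseteq> {a..b} \<Longrightarrow> ennreal (chord_sum g ts) \<le> curve_var g a b"
  unfolding curve_var_eq_SUP_chord_sum by (rule SUP_upper) auto

lemma dist_le_curve_var: "a \<le> b \<Longrightarrow> ennreal (dist (g a) (g b)) \<le> curve_var g a b"
  using chord_sum_le_curve_var[of "[a, b]" a b g] by simp

lemma curve_var_mono: "c \<le> a \<Longrightarrow> b \<le> d \<Longrightarrow> curve_var g a b \<le> curve_var g c d"
  unfolding curve_var_eq_SUP_chord_sum by (rule SUP_subset_mono) auto

lemma curve_var_superadditive:
  assumes "a \<le> b" "b \<le> c"
  shows "curve_var g a b + curve_var g b c \<le> curve_var g a c"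
proof -
  let ?P = "\<lambda>a b. {ts. sorted ts \<and> set ts \<subseteq> {a..b}}"
  have ne: "?P a b \<noteq> {}" "?P b c \<noteq> {}" by (auto intro!: exI[of _ "[]"])
  have concat: "ennreal (chord_sum g xs) + ennreal (chord_sum g ys) \<le> curve_var g a c"
    if xs: "sorted xs" "set xs \<subseteq> {a..b}" and ys: "sorted ys" "set ys \<subseteq> {b..c}" for xs ys
  proof -
    have "x \<le> y" if "x \<in> set xs" "y \<in> set ys" for x y
      using that xs(2) ys(2) by (meson atLeastAtMost_iff order_trans subsetD)
    then have "sorted (xs @ ys)" "set (xs @ ys) \<subseteq> {a..c}"
      using xs ys assms by (auto simp: sorted_append)
    then have "ennreal (chord_sum g (xs @ ys)) \<le> curve_var g a c"
      by (rule chord_sum_le_curve_var)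
    moreover have "chord_sum g xs + chord_sum g ys \<le> chord_sum g (xs @ ys)"
      by (rule chord_sum_add_le_append)
    ultimately show ?thesis
      by (metis chord_sum_nonneg ennreal_leI ennreal_plus order_trans)
  qed
  have "curve_var g a b + curve_var g b c =
      (SUP ys\<in>?P b c. SUP xs\<in>?P a b. ennreal (chord_sum g xs) + ennreal (chord_sum g ys))"
    unfolding curve_var_eq_SUP_chord_sum
    by (simp only: ennreal_SUP_add_left[OF ne(1), symmetric] ennreal_SUP_add_right[OF ne(2)])
  also have "\<dots> \<le> curve_var g a c"
    by (intro SUP_least) (auto intro: concat)
  finally show ?thesis .
qed

lemma curve_var_subadditive:
  assumes "a \<le> b" "b \<le> c"
  shows "curve_var g a c \<le> curve_var g a b + curve_var g b c"
  unfolding curve_var_eq_SUP_chord_sum[of g a c]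
proof (rule SUP_least)
  fix ts assume ts: "ts \<in> {ts. sorted ts \<and> set ts \<subseteq> {a..c}}"
  define xs where "xs = takeWhile (\<lambda>x. x \<le> b) ts"
  define ys where "ys = dropWhile (\<lambda>x. x \<le> b) ts"
  have ys_gt: "b < y" if "y \<in> set ys" for y
    using that ts unfolding ys_def by (induction ts) (auto split: if_splits)
  have "sorted (xs @ [b])" "set (xs @ [b]) \<subseteq> {a..b}"
    using ts assms unfolding xs_def
    by (auto simp: sorted_append sorted_takeWhile dest!: set_takeWhileD)
  then have xs_le: "ennreal (chord_sum g (xs @ [b])) \<le> curve_var g a b"
    by (rule chord_sum_le_curve_var)
  have "sorted (b # ys)" "set (b # ys) \<subseteq> {b..c}"
    using ts assms ys_gt unfolding ys_def
    by (auto simp: sorted_dropWhile less_imp_le dest: set_dropWhileD)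
  then have ys_le: "ennreal (chord_sum g (b # ys)) \<le> curve_var g b c"
    by (rule chord_sum_le_curve_var)
  have "ennreal (chord_sum g ts) \<le> ennreal (chord_sum g (xs @ [b]) + chord_sum g (b # ys))"
    using chord_sum_append_le_insert[of g xs ys b] unfolding xs_def ys_def
    by (simp add: ennreal_leI)
  also have "\<dots> \<le> curve_var g a b + curve_var g b c"
    using add_mono[OF xs_le ys_le] by (simp add: chord_sum_nonneg)
  finally show "ennreal (chord_sum g ts) \<le> curve_var g a b + curve_var g b c" .
qed

lemma curve_var_add:
  "a \<le> b \<Longrightarrow> b \<le> c \<Longrightarrow> curve_var g a c = curve_var g a b + curve_var g b c"
  by (rule antisym[OF curve_var_subadditive curve_var_superadditive])

lemma curve_var_finite:
  "rectifiable_curve g \<Longrightarrow> 0 \<le> a \<Longrightarrow> b \<le> 1 \<Longrightarrow> curve_var g a b < \<infinity>"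
  unfolding rectifiable_curve_def using curve_var_mono[of 0 a b 1 g] by (auto simp: top_unique)


lemma arclen_diff:
  assumes "rectifiable_curve g" "0 \<le> a" "a \<le> b" "b \<le> 1"
  shows "arclen g b - arclen g a = enn2real (curve_var g a b)"
proof -
  have "curve_var g 0 b = curve_var g 0 a + curve_var g a b"
    using curve_var_add assms by auto
  moreover have "curve_var g 0 a < \<infinity>" "curve_var g a b < \<infinity>"
    using curve_var_finite[OF assms(1)] assms by auto
  ultimately show ?thesis
    using assms by (simp add: arclen_def enn2real_plus)
qed

lemma arclen_mono:
  assumes "rectifiable_curve g"
  shows "mono (arclen g)"
proof (rule monoI)
  fix x y :: real assume "x \<le> y"
  have "curve_var g 0 (max 0 (min y 1)) < \<infinity>"
    using assms by (intro curve_var_finite) auto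
  then show "arclen g x \<le> arclen g y"
    unfolding arclen_def using \<open>x \<le> y\<close> by (intro enn2real_mono curve_var_mono) auto
qed


lemma exists_near_right_point_below_finite:
  fixes g :: "real \<Rightarrow> 'a::metric_space"
  assumes g: "continuous_on {0..1} g" and t: "0 \<le> t" "t < 1" and S: "finite S" and e: "0 < e"
  shows "\<exists>s. t < s \<and> s \<le> 1 \<and> (\<forall>x\<in>S. t < x \<longrightarrow> s < x) \<and> dist (g t) (g s) < e"
proof -
  define m where "m = Min (insert 1 {x\<in>S. t < x})"
  have m: "t < m" "m \<le> 1" "\<And>x. x \<in> S \<Longrightarrow> t < x \<Longrightarrow> m \<le> x"
    unfolding m_def using t S by auto
  obtain d where d: "0 < d" "\<And>s. s \<in> {0..1} \<Longrightarrow> dist s t < d \<Longrightarrow> dist (g s) (g t) < e"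
    using g t e unfolding continuous_on_iff by (metis atLeastAtMost_iff less_eq_real_def)
  obtain \<delta> where \<delta>: "0 < \<delta>" "\<delta> < d" "t + \<delta> < m"
    using field_lbound_gt_zero[OF d(1), of "m - t"] m(1) by auto
  have "dist (g t) (g (t + \<delta>)) < e"
    using d(2)[of "t + \<delta>"] \<delta> m t by (simp add: dist_commute dist_real_def)
  then show ?thesis
    using \<delta> m by (intro exI[of _ "t + \<delta>"]) force
qed

(* var[t,s] = var[t,1] - var[s,1], and a nearly optimal partition of [t,1] loses at most
   dist (g t) (g s) when its points in [t,s] are moved to s. *)
lemma curve_var_small_right:
  assumes g: "rectifiable_curve g" and t: "0 \<le> t" "t < 1" and e: "0 < \<epsilon>"
  shows "\<exists>\<delta>>0. t + \<delta> \<le> 1 \<and> enn2real (curve_var g t (t + \<delta>)) < \<epsilon>"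
proof (cases "enn2real (curve_var g t 1) < \<epsilon>")
  case True
  then show ?thesis using t by (intro exI[of _ "1 - t"]) auto
next
  case False
  define L where "L = enn2real (curve_var g t 1)"
  have "curve_var g t 1 = ennreal L"
    using curve_var_finite[OF g] t unfolding L_def by (simp add: ennreal_enn2real_if less_top)
  moreover have "ennreal (L - \<epsilon>/2) < ennreal L"
    using False e unfolding L_def by (intro ennreal_lessI) auto
  ultimately have "ennreal (L - \<epsilon>/2) < curve_var g t 1" by simp
  then obtain ts where ts: "sorted ts" "set ts \<subseteq> {t..1}"
    and "ennreal (L - \<epsilon>/2) < ennreal (chord_sum g ts)"
    unfolding curve_var_eq_SUP_chord_sum less_SUP_iff by auto
  then have L_lt: "L - \<epsilon>/2 < chord_sum g ts"
    using False e by (simp add: ennreal_less_iff chord_sum_nonneg L_def)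
  have "continuous_on {0..1} g" using g unfolding rectifiable_curve_def by auto
  then obtain s where s: "t < s" "s \<le> 1" "\<forall>x\<in>set ts. t < x \<longrightarrow> s < x" "dist (g t) (g s) < \<epsilon>/2"
    using exists_near_right_point_below_finite[OF _ t, of g "set ts" "\<epsilon>/2"] e by auto
  then have ts_s: "\<forall>x\<in>set ts. x = t \<or> s < x"
    using ts(2) by fastforce
  have "sorted (map (max s) ts)" "set (map (max s) ts) \<subseteq> {s..1}"
    using ts s by (auto intro!: sorted_map_mono simp: mono_on_def)
  then have "ennreal (chord_sum g (map (max s) ts)) \<le> curve_var g s 1"
    by (rule chord_sum_le_curve_var)
  moreover have "curve_var g s 1 < top"
    using curve_var_finite[OF g] s t by auto
  ultimately have "enn2real (chord_sum g (map (max s) ts)) \<le> enn2real (curve_var g s 1)"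
    by (rule enn2real_mono)
  then have "chord_sum g (map (max s) ts) \<le> enn2real (curve_var g s 1)"
    by (simp add: chord_sum_nonneg)
  moreover have "chord_sum g ts \<le> chord_sum g (map (max s) ts) + dist (g t) (g s)"
    using s ts ts_s by (intro chord_sum_le_map_max) auto
  moreover have "L = enn2real (curve_var g t s) + enn2real (curve_var g s 1)"
    using curve_var_add[of t s 1 g] curve_var_finite[OF g] s t
    unfolding L_def by (simp add: enn2real_plus)
  ultimately have "enn2real (curve_var g t s) < \<epsilon>"
    using L_lt s by linarith
  then show ?thesis using s by (intro exI[of _ "s - t"]) auto
qed

lemma arclen_continuous_at_right:
  assumes g: "rectifiable_curve g"
  shows "continuous (at_right a) (arclen g)"
proof -
  have "\<exists>\<delta>>0. arclen g (a + \<delta>) - arclen g a < \<epsilon>" if e: "0 < \<epsilon>" for \<epsilon>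
  proof -
    consider "a < 0" | "1 \<le> a" | "0 \<le> a" "a < 1" by linarith
    then show ?thesis
    proof cases
      case 1
      then show ?thesis using e by (intro exI[of _ "-a"]) (auto simp: arclen_def)
    next
      case 2
      then show ?thesis using e by (intro exI[of _ 1]) (auto simp: arclen_def)
    next
      case 3
      then obtain \<delta> where "0 < \<delta>" "a + \<delta> \<le> 1" "enn2real (curve_var g a (a + \<delta>)) < \<epsilon>"
        using curve_var_small_right[OF g _ _ e] by blast
      then show ?thesis using arclen_diff[OF g, of a "a + \<delta>"] 3 by (intro exI[of _ \<delta>]) auto
    qed
  qed
  then show ?thesis
    using continuous_at_right_real_increasing[of "arclen g" a] arclen_mono[OF g]
    by (auto simp: mono_def)
qed

lemma emeasure_arclen_Ioc:
  assumes g: "rectifiable_curve g" and ab: "0 \<le> a" "a \<le> b" "b \<le> 1"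
  shows "emeasure (interval_measure (arclen g)) {a<..b} = curve_var g a b"
proof -
  have "emeasure (interval_measure (arclen g)) {a<..b} = ennreal (arclen g b - arclen g a)"
    using arclen_mono[OF g] arclen_continuous_at_right[OF g] ab(2)
    by (intro emeasure_interval_measure_Ioc) (auto simp: mono_def)
  also have "\<dots> = curve_var g a b"
    using arclen_diff[OF g ab] curve_var_finite[OF g ab(1,3)]
    by (simp add: ennreal_enn2real_if less_top)
  finally show ?thesis .
qed

lemma first_hitting_time:
  fixes \<phi> :: "real \<Rightarrow> real"
  assumes cont: "continuous_on {u..v} \<phi>" and "u \<le> v" "\<phi> u \<le> r" "r \<le> \<phi> v"
  shows "\<exists>\<tau>\<in>{u..v}. \<phi> \<tau> = r \<and> (\<forall>t\<in>{u..\<tau>}. \<phi> t \<le> r)"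
proof -
  define S where "S = {t\<in>{u..v}. \<phi> t = r}"
  have "S \<noteq> {}" using IVT'[of \<phi> u r v] assms unfolding S_def by auto
  moreover have bdd: "bdd_below S" unfolding S_def by (rule bdd_belowI[of _ u]) auto
  moreover have "closed S"
    unfolding S_def using cont by (rule continuous_closed_preimage_constant) simp
  ultimately have \<tau>: "Inf S \<in> S" by (rule closed_contains_Inf)
  have "\<phi> t \<le> r" if t: "u \<le> t" "t \<le> Inf S" for t
  proof (rule ccontr)
    assume "\<not> \<phi> t \<le> r"
    moreover have "continuous_on {u..t} \<phi>"
      using cont t \<tau> unfolding S_def by (auto intro: continuous_on_subset)
    ultimately obtain x where x: "u \<le> x" "x \<le> t" "\<phi> x = r"
      using IVT'[of \<phi> u r t] assms t by auto
    then have "x \<in> S" using t \<tau> unfolding S_def by auto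
    then have "Inf S \<le> x" using bdd by (rule cInf_lower)
    then have "x = t" using x(2) t(2) by linarith
    then show False using x(3) \<open>\<not> \<phi> t \<le> r\<close> by simp
  qed
  then show ?thesis using \<tau> unfolding S_def by auto
qed

lemma last_hitting_time:
  fixes \<phi> :: "real \<Rightarrow> real"
  assumes cont: "continuous_on {u..v} \<phi>" and "u \<le> v" "r \<le> \<phi> u" "\<phi> v \<le> r"
  shows "\<exists>\<tau>\<in>{u..v}. \<phi> \<tau> = r \<and> (\<forall>t\<in>{\<tau>..v}. \<phi> t \<le> r)"
proof -
  have "continuous_on {-v..-u} (\<phi> \<circ> uminus)"
    using cont by (intro continuous_on_compose continuous_intros) auto
  then obtain \<sigma> where \<sigma>: "\<sigma> \<in> {-v..-u}" "\<phi> (-\<sigma>) = r" "\<forall>s\<in>{-v..\<sigma>}. \<phi> (-s) \<le> r"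
    using first_hitting_time[of "-v" "-u" "\<phi> \<circ> uminus" r] assms by auto
  show ?thesis
  proof (intro bexI[of _ "-\<sigma>"] conjI ballI)
    fix t assume "t \<in> {-\<sigma>..v}"
    then have "-t \<in> {-v..\<sigma>}" by auto
    then show "\<phi> t \<le> r" using \<sigma>(3) by fastforce
  qed (use \<sigma> in auto)
qed

lemma curve_subarc_in_cball:
  fixes g :: "real \<Rightarrow> 'a::metric_space"
  assumes cont: "continuous_on {0..1} g" and t0: "t0 \<in> {0..1}" and t1: "t1 \<in> {0..1}"
    and r: "0 \<le> r" "r \<le> dist (g t0) (g t1)"
  shows "\<exists>a b. 0 \<le> a \<and> a \<le> b \<and> b \<le> 1 \<and> r \<le> dist (g a) (g b) \<and> g ` {a..b} \<subseteq> cball (g t0) r"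
proof -
  define \<phi> where "\<phi> = (\<lambda>t. dist (g t0) (g t))"
  have cont_\<phi>: "continuous_on {u..v} \<phi>" if "0 \<le> u" "v \<le> 1" for u v
    unfolding \<phi>_def using that by (intro continuous_intros continuous_on_subset[OF cont]) auto
  have "\<phi> t0 = 0" "r \<le> \<phi> t1" using r unfolding \<phi>_def by auto
  consider "t0 \<le> t1" | "t1 \<le> t0" by linarith
  then show ?thesis
  proof cases
    case 1
    have "\<exists>\<tau>\<in>{t0..t1}. \<phi> \<tau> = r \<and> (\<forall>t\<in>{t0..\<tau>}. \<phi> t \<le> r)"
      using t0 t1 r 1 \<open>\<phi> t0 = 0\<close> \<open>r \<le> \<phi> t1\<close> by (intro first_hitting_time cont_\<phi>) auto
    then obtain \<tau> where "\<tau> \<in> {t0..t1}" "\<phi> \<tau> = r" "\<forall>t\<in>{t0..\<tau>}. \<phi> t \<le> r" by blast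
    then show ?thesis
      using t0 t1 unfolding \<phi>_def by (intro exI[of _ t0] exI[of _ \<tau>]) auto
  next
    case 2
    have "\<exists>\<tau>\<in>{t1..t0}. \<phi> \<tau> = r \<and> (\<forall>t\<in>{\<tau>..t0}. \<phi> t \<le> r)"
      using t0 t1 r 2 \<open>\<phi> t0 = 0\<close> \<open>r \<le> \<phi> t1\<close> by (intro last_hitting_time cont_\<phi>) auto
    then obtain \<tau> where "\<tau> \<in> {t1..t0}" "\<phi> \<tau> = r" "\<forall>t\<in>{\<tau>..t0}. \<phi> t \<le> r" by blast
    then show ?thesis
      using t0 t1 unfolding \<phi>_def by (intro exI[of _ \<tau>] exI[of _ t0]) (auto simp: dist_commute)
  qed
qed

lemma line_integral_ge_one:
  assumes g: "rectifiable_curve g" and t0: "t0 \<in> {0..1}" "g t0 \<in> A" and t1: "t1 \<in> {0..1}"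
    and r: "0 < r" "r \<le> dist (g t0) (g t1)"
    and \<rho>: "\<And>x. x \<in> closed_nbhd A r \<Longrightarrow> ennreal (1 / r) \<le> \<rho> x"
  shows "1 \<le> line_integral \<rho> g"
proof -
  have "continuous_on {0..1} g" using g unfolding rectifiable_curve_def by auto
  then obtain a b where ab: "0 \<le> a" "a \<le> b" "b \<le> 1" "r \<le> dist (g a) (g b)"
    and in_ball: "g ` {a..b} \<subseteq> cball (g t0) r"
    using curve_subarc_in_cball[OF _ t0(1) t1] r by (metis less_imp_le)
  have in_nbhd: "g t \<in> closed_nbhd A r" if "t \<in> {a..b}" for t
  proof -
    have "infdist (g t) A \<le> dist (g t) (g t0)" by (rule infdist_le[OF t0(2)])
    also have "\<dots> \<le> r" using in_ball that by (auto simp: dist_commute image_subset_iff)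
    finally show ?thesis unfolding closed_nbhd_def using t0 by auto
  qed
  let ?\<mu> = "interval_measure (arclen g)"
  have arc: "ennreal r \<le> emeasure ?\<mu> {a<..b}"
    using ab dist_le_curve_var[of a b g] emeasure_arclen_Ioc[OF g ab(1-3)]
    by (metis ennreal_leI order_trans)
  have "1 = ennreal (1 / r) * ennreal r" using r(1) by (simp flip: ennreal_mult)
  also have "\<dots> \<le> ennreal (1 / r) * emeasure ?\<mu> {a<..b}"
    using arc by (rule mult_left_mono) simp
  also have "\<dots> = (\<integral>\<^sup>+ t. ennreal (1 / r) * indicator {a<..b} t \<partial>?\<mu>)"
    by (rule nn_integral_cmult_indicator[symmetric]) simp
  also have "\<dots> \<le> line_integral \<rho> g"
    unfolding line_integral_def
    using \<rho> in_nbhd ab by (intro nn_integral_mono) (auto simp: indicator_def)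
  finally show ?thesis .
qed

lemma closed_closed_nbhd: "closed (closed_nbhd A r)"
proof (cases "A = {}")
  case False
  then have "closed_nbhd A r = {z. infdist z A \<le> r}" unfolding closed_nbhd_def by auto
  then show ?thesis by (simp add: closed_Collect_le continuous_on_infdist)
qed (simp add: closed_nbhd_def)

lemma emeasure_le_outer_meas_Diff:
  assumes S: "S \<in> sets M" and A: "outer_meas M A = 0"
  shows "emeasure M S \<le> outer_meas M (S - A)"
  unfolding outer_meas_def[of M "S - A"]
proof (rule INF_greatest)
  fix T assume T: "T \<in> {T \<in> sets M. S - A \<subseteq> T}"
  show "emeasure M S \<le> emeasure M T"
  proof (rule ennreal_le_epsilon)
    fix e :: real assume "0 < e"
    then have "outer_meas M A < ennreal e" using A by simp
    then obtain B where B: "B \<in> sets M" "A \<subseteq> B" "emeasure M B < ennreal e"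
      unfolding outer_meas_def INF_less_iff by auto
    have "emeasure M S \<le> emeasure M (T \<union> B)" using S T B by (intro emeasure_mono) auto
    also have "\<dots> \<le> emeasure M T + emeasure M B" using T B by (intro emeasure_subadditive) auto
    also have "\<dots> \<le> emeasure M T + ennreal e" using B by (intro add_left_mono) simp
    finally show "emeasure M S \<le> emeasure M T + ennreal e" .
  qed
qed

lemma AM_admissible_nbhd_indicator:
  assumes M: "sets M = sets borel" and r: "\<And>j. 0 < r j" "r \<longlonglongrightarrow> 0"
  shows "AM_admissible M A (\<lambda>j x. ennreal (1 / r j) * indicator (closed_nbhd A (r j)) x)"
  unfolding AM_admissible_def
proof (intro conjI allI ballI)
  fix j
  have "closed_nbhd A (r j) \<in> sets M" unfolding M by (rule borel_closed[OF closed_closed_nbhd])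
  then show "(\<lambda>x. ennreal (1 / r j) * indicator (closed_nbhd A (r j)) x) \<in> borel_measurable M"
    by measurable
next
  fix g assume g: "g \<in> test_curves A"
  then have rect: "rectifiable_curve g" unfolding test_curves_def by auto
  obtain t0 where t0: "t0 \<in> {0..1}" "g t0 \<in> A" using g unfolding test_curves_def by blast
  obtain s t where "s \<in> {0..1}" "t \<in> {0..1}" "g s \<noteq> g t" using g unfolding test_curves_def by blast
  then obtain t1 where t1: "t1 \<in> {0..1}" "g t1 \<noteq> g t0" by (cases "g s = g t0") auto
  have "0 < dist (g t0) (g t1)" using t1 by simp
  then have "eventually (\<lambda>j. r j < dist (g t0) (g t1)) sequentially"
    by (rule order_tendstoD(2)[OF r(2)])
  then have "eventually (\<lambda>j. 1 \<le> line_integral (\<lambda>x. ennreal (1 / r j) * indicator (closed_nbhd A (r j)) x) g) sequentially"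
  proof eventually_elim
    case (elim j)
    show ?case
      by (rule line_integral_ge_one[OF rect t0 t1(1) r(1)[of j]]) (use elim in auto)
  qed
  then show "1 \<le> Liminf sequentially (\<lambda>j. line_integral (\<lambda>x. ennreal (1 / r j) * indicator (closed_nbhd A (r j)) x) g)"
    by (rule Liminf_bounded)
qed

lemma nn_integral_nbhd_indicator_le:
  assumes M: "sets M = sets borel" and A: "outer_meas M A = 0" and r: "0 < r"
  shows "(\<integral>\<^sup>+ x. enn_powr (ennreal (1 / r) * indicator (closed_nbhd A r) x) p \<partial>M)
    \<le> outer_meas M (closed_nbhd A r - A) / ennreal (r powr p)"
proof -
  let ?N = "closed_nbhd A r"
  have N: "?N \<in> sets M" unfolding M by (rule borel_closed[OF closed_closed_nbhd])
  have "enn_powr (ennreal (1 / r) * indicator ?N x) p = ennreal ((1 / r) powr p) * indicator ?N x" for x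
    using r by (auto simp: enn_powr_def indicator_def)
  then have "(\<integral>\<^sup>+ x. enn_powr (ennreal (1 / r) * indicator ?N x) p \<partial>M)
      = ennreal ((1 / r) powr p) * emeasure M ?N"
    using N by (simp add: nn_integral_cmult_indicator)
  also have "\<dots> \<le> ennreal ((1 / r) powr p) * outer_meas M (?N - A)"
    using emeasure_le_outer_meas_Diff[OF N A] by (rule mult_left_mono) simp
  also have "\<dots> = outer_meas M (?N - A) / ennreal (r powr p)"
    using r by (simp add: powr_divide divide_ennreal_def inverse_ennreal inverse_eq_divide mult.commute)
  finally show ?thesis .
qed

lemma approx_modulus_le_Liminf_nbhd:
  assumes M: "sets M = sets borel" and A: "outer_meas M A = 0"
    and r: "\<And>j. 0 < r j" "r \<longlonglongrightarrow> 0"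
  shows "approx_modulus p A M
    \<le> Liminf sequentially (\<lambda>j. outer_meas M (closed_nbhd A (r j) - A) / ennreal (r j powr p))"
proof -
  let ?\<rho> = "\<lambda>j x. ennreal (1 / r j) * indicator (closed_nbhd A (r j)) x"
  have "approx_modulus p A M \<le> Liminf sequentially (\<lambda>j. \<integral>\<^sup>+ x. enn_powr (?\<rho> j x) p \<partial>M)"
    unfolding approx_modulus_def
    by (rule INF_lower) (use AM_admissible_nbhd_indicator[OF M r] in simp)
  also have "\<dots> \<le> Liminf sequentially (\<lambda>j. outer_meas M (closed_nbhd A (r j) - A) / ennreal (r j powr p))"
    by (intro Liminf_mono always_eventually allI nn_integral_nbhd_indicator_le M A r)
  finally show ?thesis .
qed

lemma le_Liminf_at_right_0_sequentiallyI:
  fixes f :: "real \<Rightarrow> 'b::complete_linorder"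
  assumes "\<And>r. (\<And>j. 0 < r j) \<Longrightarrow> r \<longlonglongrightarrow> 0 \<Longrightarrow> C \<le> Liminf sequentially (\<lambda>j. f (r j))"
  shows "C \<le> Liminf (at_right 0) f"
  unfolding le_Liminf_iff
proof (intro allI impI)
  fix y assume "y < C"
  show "eventually (\<lambda>x. y < f x) (at_right 0)"
  proof (rule ccontr)
    assume "\<not> eventually (\<lambda>x. y < f x) (at_right 0)"
    have "\<exists>x. 0 < x \<and> x < 1 / Suc n \<and> f x \<le> y" for n :: nat
    proof -
      have "0 < 1 / real (Suc n)" by simp
      then have "\<not> (\<forall>x>0. x < 1 / Suc n \<longrightarrow> y < f x)"
        using \<open>\<not> eventually (\<lambda>x. y < f x) (at_right 0)\<close> unfolding eventually_at_right_field by blast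
      then show ?thesis by (auto simp: not_less)
    qed
    then obtain r where r: "\<And>n. 0 < r n" "\<And>n. r n < 1 / Suc n" "\<And>n. f (r n) \<le> y"
      by metis
    have "r \<longlonglongrightarrow> 0"
      using r(1,2) by (intro tendsto_sandwich[OF _ _ tendsto_const LIMSEQ_inverse_real_of_nat])
        (auto simp: inverse_eq_divide less_imp_le)
    then have "C \<le> Liminf sequentially (\<lambda>j. f (r j))" using assms r(1) by blast
    also have "\<dots> \<le> y" using r(3) by (intro Liminf_le) auto
    finally show False using \<open>y < C\<close> by simp
  qed
qed

theorem lemma3p16:
  fixes M :: "'a::polish_space measure" and A :: "'a set" and p :: real
  assumes "metric_measure_space M" and "p \<ge> 1" and "outer_meas M A = 0"
  shows "approx_modulus p A M \<le> minkowski_content M p A"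
proof -
  have M: "sets M = sets borel" using assms(1) unfolding metric_measure_space_def by simp
  show ?thesis
    unfolding minkowski_content_def
    by (rule le_Liminf_at_right_0_sequentiallyI) (rule approx_modulus_le_Liminf_nbhd[OF M assms(3)])
qed

end
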